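(* Let $r\in\mathbb{N}$ with $r\ge2$, $v\in\mathbb{YF}^{r,+}_\infty$, $\beta\in(0,1]$ and $u\in\mathbb{YF}$. Then $$\sum_{w\in S_r(u)}\mu_{r,v,\beta}(w)=\mu_{s(v),\beta}(u),$$ where $S_r(u)=\{w\in\mathbb{YF}^r:s(w)=u\}$.
   Context: Fix $r\in\mathbb{N}$. Words and statistics. Consider finite words over $\{1_1,\dots,1_r,2\}$. A letter $1_i$ is a one with digit value $1$; $2$ is a two with digit value $2$. $\varepsilon$ is the empty word. $|x|$ is the sum of digit values, $d(x)$ the number of twos. The graph $\mathbb{YF}^r$. It is the graded graph on all finite words, graded by $|\cdot|$. From $x$ there is a downward edge to every word obtained by one of two operations: (i) delete the leftmost one; (ii) replace a $2$ lying left of the leftmost one (any $2$ if there are no ones) by $1_i$, with arbitrary $i$. $\mathbb{YF}=\mathbb{YF}^1$ (with $1:=1_1$). $s$ replaces every $1_i$ by $1$, for finite and infinite words alike. Path counts. $d_r(x,y)$ is the number of downward paths $y=y_n\to\dots\to y_m=x$ with $|y_i|=i$. Infinite words. $\mathbb{YF}^r_\infty$ is the set of left-infinite words $\dots\alpha_2\alpha_1$. The function $g$. Write $x=\dots2\,1^{\beta_m}\,2\cdots2\,1^{\beta_1}\,2\,1^{\beta_0}$, where $1^\beta$ is a possibly empty block of $\beta$ ones. For $1\le j\le d(x)$ set $g(x,j)=\beta_0+\dots+\beta_{j-1}+2j-1$. The function $\pi$. Set $\pi(x)=\prod_{j:g(x,j)>1}\frac{g(x,j)-1}{g(x,j)}$;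 note $\pi(x)=\pi(s(x))$. Let $\mathbb{YF}^{r,+}_\infty=\{v:\pi(v)>0\}$. Letterwise convergence. $v_n\to v$ letterwise means: for every $k$ and all large $n$, the last $k$ letters of $v_n$ equal the last $k$ letters of $v$. The measures $\mu_{r,v,\beta}$. For $v\in\mathbb{YF}^{r,+}_\infty$ and $\beta\in(0,1]$ there exist finite $v_n\to v$ letterwise with $\pi(v_n)\to\beta\pi(v)$. For any such sequence and any finite $w$, the limit $\lim_n d_r(\varepsilon,w)d_r(w,v_n)/d_r(\varepsilon,v_n)$ exists and depends only on $w,v,\beta$ (proved in the paper). It is denoted $\mu_{r,v,\beta}(w)$. For $r=1$ (the graph $\mathbb{YF}$) we write $\mu_{v,\beta}=\mu_{1,v,\beta}$. *)

theory Defs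
  imports Complex_Main
begin

(* Letters: One i is the one 1_i (i \<in> {1..r}); Two is the two. *)
datatype letter = One nat | Two

(* Finite words: lists, the head is the LEFTMOST letter. *)
type_synonym word = "letter list"

(* Left-infinite words ...a_2 a_1: v p is the (p+1)-th letter from the right, i.e. v 0 = a_1. *)
type_synonym iword = "nat \<Rightarrow> letter"

definition letter_ok :: "nat \<Rightarrow> letter \<Rightarrow> bool" where
  "letter_ok r l \<longleftrightarrow> l = Two \<or> (\<exists>i. 1 \<le> i \<and> i \<le> r \<and> l = One i)"

definition wf_word :: "nat \<Rightarrow> word \<Rightarrow> bool" where
  "wf_word r x \<longleftrightarrow> (\<forall>l\<in>set x. letter_ok r l)"

definition wf_iword :: "nat \<Rightarrow> iword \<Rightarrow> bool" where
  "wf_iword r v \<longleftrightarrow> (\<forall>p. letter_ok r (v p))"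

fun lval :: "letter \<Rightarrow> nat" where
  "lval (One i) = 1"
| "lval Two = 2"

definition wsize :: "word \<Rightarrow> nat" where
  "wsize x = sum_list (map lval x)"

definition dcount :: "word \<Rightarrow> nat" where
  "dcount x = length (filter (\<lambda>l. l = Two) x)"

fun sl :: "letter \<Rightarrow> letter" where
  "sl (One i) = One 1"
| "sl Two = Two"

definition s_word :: "word \<Rightarrow> word" where
  "s_word x = map sl x"

definition s_iword :: "iword \<Rightarrow> iword" where
  "s_iword v = (\<lambda>p. sl (v p))"

(* downward neighbours of x in YF^r:
   (i) delete the leftmost one;
   (ii) replace a 2 lying left of the leftmost one (any 2 if there are no ones) by 1_i. *)
definition down :: "nat \<Rightarrow> word \<Rightarrow> word set" where
  "down r x =
     {y. \<exists>j<length x. (\<forall>k<j. x ! k = Two) \<and> x ! j \<noteq> Two \<and> y = take j x @ drop (Suc j) x}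
   \<union> {y. \<exists>j<length x. \<exists>i. (\<forall>k<j. x ! k = Two) \<and> x ! j = Two \<and> 1 \<le> i \<and> i \<le> r
                \<and> y = x[j := One i]}"

(* d_r(x,y): number of downward paths y = y_n \<rightarrow> ... \<rightarrow> y_m = x with |y_i| = i.
   A path is the list [y_n, y_(n-1), ..., y_m]. *)
definition dpaths :: "nat \<Rightarrow> word \<Rightarrow> word \<Rightarrow> nat" where
  "dpaths r x y = card {ps :: word list. ps \<noteq> [] \<and> hd ps = y \<and> last ps = x
      \<and> (\<forall>i. Suc i < length ps \<longrightarrow> ps ! Suc i \<in> down r (ps ! i))
      \<and> (\<forall>i<length ps. wsize (ps ! i) + i = wsize y)}"

(* The j-th two counted from the right sits at position p (from the right,
   0-based); g(x,j) = beta_0 + ... + beta_(j-1) + 2j - 1 = (sum of the digit values of the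
   last p+1 letters) - 1. *)
definition twopos_inf :: "iword \<Rightarrow> nat \<Rightarrow> nat" where
  "twopos_inf v j = (THE p. v p = Two \<and> card {k. k < p \<and> v k = Two} = j - 1)"

definition has_two_inf :: "iword \<Rightarrow> nat \<Rightarrow> bool" where
  "has_two_inf v j \<longleftrightarrow> 1 \<le> j \<and> (\<exists>p. v p = Two \<and> card {k. k < p \<and> v k = Two} = j - 1)"

definition g_inf :: "iword \<Rightarrow> nat \<Rightarrow> nat" where
  "g_inf v j = (\<Sum>k\<le>twopos_inf v j. lval (v k)) - 1"

definition twopos_fin :: "word \<Rightarrow> nat \<Rightarrow> nat" where
  "twopos_fin x j = (THE p. p < length x \<and> rev x ! p = Two
                          \<and> card {k. k < p \<and> rev x ! k = Two} = j - 1)"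

definition g_fin :: "word \<Rightarrow> nat \<Rightarrow> nat" where
  "g_fin x j = (\<Sum>k\<le>twopos_fin x j. lval (rev x ! k)) - 1"

definition pi_fin :: "word \<Rightarrow> real" where
  "pi_fin x = (\<Prod>j\<in>{j. 1 \<le> j \<and> j \<le> dcount x \<and> g_fin x j > 1}.
                  (real (g_fin x j) - 1) / real (g_fin x j))"

(* \<pi> for left-infinite words: the (possibly infinite) product, as the limit of the
   partial products over j \<le> N (these are non-increasing and nonnegative). *)
definition pi_inf :: "iword \<Rightarrow> real" where
  "pi_inf v = lim (\<lambda>N. \<Prod>j\<in>{j. j \<le> N \<and> has_two_inf v j \<and> g_inf v j > 1}.
                  (real (g_inf v j) - 1) / real (g_inf v j))"

definition YF_plus :: "nat \<Rightarrow> iword set" where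
  "YF_plus r = {v. wf_iword r v \<and> pi_inf v > 0}"

definition letterwise :: "(nat \<Rightarrow> word) \<Rightarrow> iword \<Rightarrow> bool" where
  "letterwise vs v \<longleftrightarrow> (\<forall>k. eventually (\<lambda>n. k \<le> length (vs n) \<and> (\<forall>p<k. rev (vs n) ! p = v p)) sequentially)"

(* \<mu>_{r,v,\<beta>}(w): the common limit over all admissible approximating sequences
   (existence and independence are proved in the paper) *)
definition mu :: "nat \<Rightarrow> iword \<Rightarrow> real \<Rightarrow> word \<Rightarrow> real" where
  "mu r v \<beta> w = (THE L. \<forall>vs. (\<forall>n. wf_word r (vs n)) \<and> letterwise vs v
        \<and> (\<lambda>n. pi_fin (vs n)) \<longlonglongrightarrow> \<beta> * pi_inf v
        \<longrightarrow> (\<lambda>n. real (dpaths r [] w) * real (dpaths r w (vs n)) / real (dpaths r [] (vs n)))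
              \<longlonglongrightarrow> L)"

definition S_set :: "nat \<Rightarrow> word \<Rightarrow> word set" where
  "S_set r u = {w. wf_word r w \<and> s_word w = u}"

end

theory Submission
  imports Defs
begin

(* The proof combines a finite identity with a limit theorem.

   The map s sends downward edges of YF^r to downward edges of YF; an edge out of s(y) that
   deletes a one lifts to exactly one edge out of y, and an edge that turns a 2 into a 1 lifts to
   exactly r edges out of y. Hence d_r(eps,y) = r^d(y) d_1(eps,s(y)) and
   r^d(u) (sum over w in S_r(u) of d_r(w,y)) = r^d(y) d_1(u,s(y)), so already at every finite level
   the sum over the fibre S_r(u) of d_r(eps,w) d_r(w,y) / d_r(eps,y) equals the corresponding
   quantity of YF at u and s(y).

   To pass to the limit one needs that the limits defining mu_{r,v,beta} exist. Write the
   approximating words as p x with a fixed suffix x of v. Solving the recursion of path counts in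
   the first letter, d_r(w,p x)/d_r(eps,p x) is a fixed linear combination of the products
   F_a(p) = prod over the twos of p of (1 - a/(s+1)), s being the size of what follows that two,
   where a runs over the sizes of the suffixes of w. F_1(p) = pi(p x)/pi(x) converges, and on the
   part of p that precedes a long suffix z of v, F_a lies between F_1^(a + O(1/|z|)) and F_1^a;
   letting z grow determines the limit of F_a(p).

   Finally, admissible sequences exist (prepending twos lowers pi in arbitrarily small steps), and
   an admissible sequence for s(v) lifts letter by letter to one for v with the same image under s. *)

section \<open>Words and downward edges\<close>

lemma wsize_Nil [simp]: "wsize [] = 0"
  by (simp add: wsize_def)

lemma wsize_Cons [simp]: "wsize (l # x) = lval l + wsize x"
  by (simp add: wsize_def)

lemma wsize_append [simp]: "wsize (x @ y) = wsize x + wsize y"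
  by (simp add: wsize_def)

lemma lval_pos: "0 < lval l"
  by (cases l) auto

lemma wsize_ge_length: "length x \<le> wsize x"
proof (induction x)
  case (Cons l x)
  then show ?case using lval_pos[of l] by simp
qed simp

lemma wsize_eq_0_iff [simp]: "wsize x = 0 \<longleftrightarrow> x = []"
  by (cases x) (auto simp: lval_pos)

lemma dcount_Nil [simp]: "dcount [] = 0"
  by (simp add: dcount_def)

lemma dcount_Cons [simp]: "dcount (l # x) = (if l = Two then Suc (dcount x) else dcount x)"
  by (simp add: dcount_def)

lemma letter_ok_Two [simp]: "letter_ok r Two"
  by (simp add: letter_ok_def)

lemma letter_ok_One [simp]: "letter_ok r (One i) \<longleftrightarrow> 1 \<le> i \<and> i \<le> r"
  by (simp add: letter_ok_def)

lemma wf_word_Nil [simp]: "wf_word r []"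
  by (simp add: wf_word_def)

lemma wf_word_Cons [simp]: "wf_word r (l # x) \<longleftrightarrow> letter_ok r l \<and> wf_word r x"
  by (simp add: wf_word_def)

lemma wf_word_append [simp]: "wf_word r (x @ y) \<longleftrightarrow> wf_word r x \<and> wf_word r y"
  by (auto simp: wf_word_def)

lemma s_word_Nil [simp]: "s_word [] = []"
  by (simp add: s_word_def)

lemma s_word_Cons [simp]: "s_word (l # x) = sl l # s_word x"
  by (simp add: s_word_def)

lemma lval_sl [simp]: "lval (sl l) = lval l"
  by (cases l) auto

lemma sl_eq_Two_iff [simp]: "sl l = Two \<longleftrightarrow> l = Two"
  by (cases l) auto

lemma wsize_s_word [simp]: "wsize (s_word x) = wsize x"
  by (induction x) auto

lemma dcount_s_word [simp]: "dcount (s_word x) = dcount x"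
  by (induction x) auto

lemma letter_ok_sl: "1 \<le> r \<Longrightarrow> letter_ok r (sl l)"
  by (cases l) auto

lemma wf_word_s_word: "wf_word 1 (s_word x)"
  by (induction x) (auto simp: letter_ok_sl)

lemma down_Nil [simp]: "down r [] = {}"
  by (simp add: down_def)

lemma down_Cons_One: "down r (One i # x) = {x}"
  unfolding down_def length_Cons Ex_less_Suc2 All_less_Suc2 by auto

lemma down_Cons_Two: "down r (Two # x) = (\<lambda>i. One i # x) ` {1..r} \<union> Cons Two ` down r x"
  unfolding down_def length_Cons Ex_less_Suc2 All_less_Suc2 by auto

lemma finite_down: "finite (down r y)"
proof (induction y)
  case (Cons l y)
  then show ?case by (cases l) (auto simp: down_Cons_One down_Cons_Two)
qed simp

lemma wsize_down: "z \<in> down r y \<Longrightarrow> wsize y = Suc (wsize z)"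
proof (induction y arbitrary: z)
  case (Cons l y)
  then show ?case by (cases l) (auto simp: down_Cons_One down_Cons_Two)
qed simp

lemma wf_word_down: "z \<in> down r y \<Longrightarrow> wf_word r y \<Longrightarrow> wf_word r z"
proof (induction y arbitrary: z)
  case (Cons l y)
  then show ?case by (cases l) (auto simp: down_Cons_One down_Cons_Two)
qed simp

section \<open>Path counts\<close>

definition paths :: "nat \<Rightarrow> word \<Rightarrow> word \<Rightarrow> word list set" where
  "paths r x y = {ps. ps \<noteq> [] \<and> hd ps = y \<and> last ps = x
      \<and> (\<forall>i. Suc i < length ps \<longrightarrow> ps ! Suc i \<in> down r (ps ! i))
      \<and> (\<forall>i<length ps. wsize (ps ! i) + i = wsize y)}"

lemma paths_hd: "ps \<in> paths r w y \<Longrightarrow> ps \<noteq> [] \<and> hd ps = y"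
  by (simp add: paths_def)

lemma Cons_in_paths_iff:
  "a # ps \<in> paths r w y \<longleftrightarrow>
     a = y \<and> (if ps = [] then w = y else hd ps \<in> down r y \<and> ps \<in> paths r w (hd ps))"
proof (cases ps)
  case (Cons b qs)
  have "wsize y = Suc (wsize b)" if "b \<in> down r y"
    using wsize_down[OF that] .
  then show ?thesis
    unfolding paths_def Cons by (simp add: All_less_Suc2 del: all_simps) auto
qed (auto simp: paths_def)

lemma paths_unfold:
  "paths r w y = (if w = y then {[y]} else {}) \<union> (\<Union>z\<in>down r y. Cons y ` paths r w z)"
proof -
  have "ps \<in> paths r w y \<longleftrightarrow> ps \<in> (if w = y then {[y]} else {}) \<union> (\<Union>z\<in>down r y. Cons y ` paths r w z)"
    for ps
  proof (cases ps)
    case Nil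
    then show ?thesis by (auto simp: paths_def)
  next
    case (Cons a qs)
    then show ?thesis
      unfolding Cons by (subst Cons_in_paths_iff) (auto dest: paths_hd)
  qed
  then show ?thesis by blast
qed

lemma finite_paths: "finite (paths r w y)"
proof (induction y rule: measure_induct_rule[of wsize])
  case (less y)
  then show ?case
    by (subst paths_unfold) (auto simp: finite_down dest: wsize_down)
qed

lemma dpaths_unfold: "dpaths r w y = (if w = y then 1 else 0) + (\<Sum>z\<in>down r y. dpaths r w z)"
proof -
  have disjoint: "(if w = y then {[y]} else {}) \<inter> (\<Union>z\<in>down r y. Cons y ` paths r w z) = {}"
    by (auto dest: paths_hd)
  have "card (\<Union>z\<in>down r y. Cons y ` paths r w z) = (\<Sum>z\<in>down r y. card (Cons y ` paths r w z))"
    by (rule card_UN_disjoint) (auto simp: finite_down finite_paths dest: paths_hd)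
  also have "\<dots> = (\<Sum>z\<in>down r y. dpaths r w z)"
    by (simp add: card_image dpaths_def paths_def[symmetric])
  finally show ?thesis
    unfolding dpaths_def paths_def[symmetric]
    by (subst paths_unfold, subst card_Un_disjoint) (use disjoint finite_paths finite_down in auto)
qed

lemma dpaths_eq_0: "wsize y < wsize w \<Longrightarrow> dpaths r w y = 0"
proof (induction y rule: measure_induct_rule[of wsize])
  case (less y)
  have "dpaths r w z = 0" if "z \<in> down r y" for z
    using less wsize_down[OF that] by simp
  with less.prems show ?case
    by (subst dpaths_unfold) (auto intro!: sum.neutral)
qed

lemma dpaths_self [simp]: "dpaths r y y = 1"
  by (subst dpaths_unfold) (auto intro!: sum.neutral dpaths_eq_0 dest: wsize_down)

lemma dpaths_Cons_One: "dpaths r w (One i # x) = (if w = One i # x then 1 else 0) + dpaths r w x"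
  by (subst dpaths_unfold) (simp add: down_Cons_One)

lemma sum_down_Cons_Two:
  "(\<Sum>z\<in>down r (Two # x). f z) = (\<Sum>i=1..r. f (One i # x)) + (\<Sum>z\<in>down r x. f (Two # z))"
  unfolding down_Cons_Two
  by (subst sum.union_disjoint) (auto simp: finite_down sum.reindex inj_on_def)

lemma indicator_Cons_tl:
  assumes "wf_word r w"
  shows "(if w = Two # x then 1 else 0) + (\<Sum>i=1..r. if w = One i # x then 1 else 0)
           = (if w \<noteq> [] \<and> tl w = x then 1 else (0::nat))"
proof (cases w)
  case (Cons l w')
  with assms show ?thesis
    by (cases l) (auto simp: sum.delta')
qed simp

(* Stated additively, since the factor r (|x| + 1 - |w|) would need truncated subtraction. *)
lemma dpaths_Cons_Two:
  assumes "wf_word r w"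
  shows "dpaths r w (Two # x) + r * wsize w * dpaths r w x
           = r * Suc (wsize x) * dpaths r w x + (if w = [] then 0 else dpaths r (tl w) x)"
proof (induction x rule: measure_induct_rule[of wsize])
  case (less x)
  define T where "T z = (if w = [] then 0 else dpaths r (tl w) z)" for z
  define S where "S = (\<Sum>z\<in>down r x. dpaths r w z)"
  define I where "I = (if w \<noteq> [] \<and> tl w = x then 1 else (0::nat))"
  define E where "E = (if w = x then 1 else (0::nat))"
  have D: "dpaths r w x = E + S"
    unfolding S_def E_def by (rule dpaths_unfold)
  have T: "T x = I + (\<Sum>z\<in>down r x. T z)"
    unfolding T_def I_def by (subst dpaths_unfold) auto
  have IH: "(\<Sum>z\<in>down r x. dpaths r w (Two # z)) + r * wsize w * S
              = r * wsize x * S + (\<Sum>z\<in>down r x. T z)"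
  proof -
    have "(\<Sum>z\<in>down r x. dpaths r w (Two # z) + r * wsize w * dpaths r w z)
            = (\<Sum>z\<in>down r x. r * wsize x * dpaths r w z + T z)"
      using less wsize_down unfolding T_def by (intro sum.cong) auto
    then show ?thesis
      unfolding S_def by (simp add: sum.distrib sum_distrib_left)
  qed
  have "dpaths r w (Two # x) = (if w = Two # x then 1 else 0)
          + (\<Sum>i=1..r. if w = One i # x then 1 else 0) + r * dpaths r w x
          + (\<Sum>z\<in>down r x. dpaths r w (Two # z))"
    by (subst dpaths_unfold) (simp add: sum_down_Cons_Two dpaths_Cons_One sum.distrib)
  also have "(if w = Two # x then 1 else 0) + (\<Sum>i=1..r. if w = One i # x then 1 else 0) = I"
    unfolding I_def by (rule indicator_Cons_tl[OF assms])
  finally have unfolded: "dpaths r w (Two # x)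
      = I + r * dpaths r w x + (\<Sum>z\<in>down r x. dpaths r w (Two # z))" .
  have "r * wsize w * dpaths r w x = r * wsize w * S + r * wsize w * E"
    unfolding D by (simp add: algebra_simps)
  with unfolded have "dpaths r w (Two # x) + r * wsize w * dpaths r w x
      = I + r * dpaths r w x + ((\<Sum>z\<in>down r x. dpaths r w (Two # z)) + r * wsize w * S)
        + r * wsize w * E"
    by linarith
  also have "\<dots> = I + r * dpaths r w x + r * wsize x * S + (\<Sum>z\<in>down r x. T z) + r * wsize x * E"
    unfolding IH E_def by simp
  also have "\<dots> = r * Suc (wsize x) * dpaths r w x + T x"
    unfolding T D by (simp add: algebra_simps)
  finally show ?case
    unfolding T_def .
qed

lemma dpaths_Nil_Cons_Two: "dpaths r [] (Two # x) = r * Suc (wsize x) * dpaths r [] x"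
  using dpaths_Cons_Two[of r "[]" x] by simp

lemma dpaths_Nil_pos: "1 \<le> r \<Longrightarrow> 0 < dpaths r [] x"
proof (induction x)
  case (Cons l x)
  then show ?case
    by (cases l) (auto simp: dpaths_Nil_Cons_Two dpaths_Cons_One)
qed (simp add: dpaths_unfold)

section \<open>Fibres of \<open>s\<close>\<close>

lemma S_set_Nil: "S_set r [] = {[]}"
  by (auto simp: S_set_def s_word_def)

lemma finite_S_set: "finite (S_set r u)"
proof (rule finite_subset)
  show "S_set r u \<subseteq> {w. set w \<subseteq> insert Two (One ` {1..r}) \<and> length w = length u}"
    by (auto simp: S_set_def s_word_def wf_word_def letter_ok_def)
  show "finite {w. set w \<subseteq> insert Two (One ` {1..r}) \<and> length w = length u}"
    by (rule finite_lists_length_eq) simp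
qed

lemma sum_S_set_indicator:
  "wf_word r y \<Longrightarrow> (\<Sum>w\<in>S_set r u. if w = y then 1 else 0) = (if s_word y = u then 1 else (0::nat))"
  by (simp add: sum.delta finite_S_set) (simp add: S_set_def)

lemma sum_down_s_word:
  fixes g :: "word \<Rightarrow> nat"
  shows "(\<Sum>z\<in>down r y. r ^ dcount z * g (s_word z)) = r ^ dcount y * (\<Sum>z\<in>down 1 (s_word y). g z)"
proof (induction y arbitrary: g)
  case (Cons l y)
  show ?case
  proof (cases l)
    case (One i)
    then show ?thesis by (simp add: down_Cons_One)
  next
    case Two
    have "(\<Sum>z\<in>down r (Two # y). r ^ dcount z * g (s_word z))
          = r * r ^ dcount y * g (One 1 # s_word y)
            + r * (\<Sum>z\<in>down r y. r ^ dcount z * (g \<circ> Cons Two) (s_word z))"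
      by (simp add: sum_down_Cons_Two sum_distrib_left algebra_simps)
    also have "\<dots> = r * r ^ dcount y * (g (One 1 # s_word y) + (\<Sum>z\<in>down 1 (s_word y). g (Two # z)))"
      using Cons.IH[of "g \<circ> Cons Two"] by (simp add: algebra_simps)
    also have "\<dots> = r ^ dcount (Two # y) * (\<Sum>z\<in>down 1 (s_word (Two # y)). g z)"
      by (simp add: sum_down_Cons_Two[where r = "Suc 0"])
    finally show ?thesis
      using Two by simp
  qed
qed simp

lemma sum_fibre_dpaths:
  assumes "wf_word r y"
  shows "r ^ dcount u * (\<Sum>w\<in>S_set r u. dpaths r w y) = r ^ dcount y * dpaths 1 u (s_word y)"
  using assms
proof (induction y rule: measure_induct_rule[of wsize])
  case (less y)
  have IH: "r ^ dcount u * (\<Sum>w\<in>S_set r u. dpaths r w z) = r ^ dcount z * dpaths 1 u (s_word z)"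
    if "z \<in> down r y" for z
    using less.IH[OF _ wf_word_down[OF that less.prems]] wsize_down[OF that] by simp
  have "r ^ dcount u * (\<Sum>w\<in>S_set r u. dpaths r w y)
        = r ^ dcount u * (if s_word y = u then 1 else 0)
          + (\<Sum>z\<in>down r y. r ^ dcount u * (\<Sum>w\<in>S_set r u. dpaths r w z))"
    by (subst dpaths_unfold)
      (simp add: sum.distrib sum_distrib_left sum_S_set_indicator[OF less.prems] sum.swap[of _ "down r y"])
  also have "\<dots> = r ^ dcount y * (if s_word y = u then 1 else 0)
          + (\<Sum>z\<in>down r y. r ^ dcount z * dpaths 1 u (s_word z))"
    using IH by (auto intro: sum.cong)
  also have "\<dots> = r ^ dcount y * dpaths 1 u (s_word y)"
    unfolding sum_down_s_word by (simp add: dpaths_unfold[of "Suc 0" u "s_word y"] algebra_simps)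
  finally show ?case .
qed

lemma dpaths_Nil_eq_s_word: "wf_word r y \<Longrightarrow> dpaths r [] y = r ^ dcount y * dpaths 1 [] (s_word y)"
  using sum_fibre_dpaths[of r y "[]"] by (simp add: S_set_Nil)

definition mu_fin :: "nat \<Rightarrow> word \<Rightarrow> word \<Rightarrow> real" where
  "mu_fin r w y = real (dpaths r [] w) * real (dpaths r w y) / real (dpaths r [] y)"

lemma sum_fibre_mu_fin:
  assumes "1 \<le> r" "wf_word r y"
  shows "(\<Sum>w\<in>S_set r u. mu_fin r w y) = mu_fin 1 u (s_word y)"
proof -
  have fibre: "real (dpaths r [] w) = r ^ dcount u * real (dpaths 1 [] u)" if "w \<in> S_set r u" for w
    using that dpaths_Nil_eq_s_word[of r w] by (auto simp: S_set_def)
  have sum: "r ^ dcount u * (\<Sum>w\<in>S_set r u. real (dpaths r w y)) = r ^ dcount y * real (dpaths 1 u (s_word y))"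
    using sum_fibre_dpaths[OF assms(2), of u] by (metis of_nat_mult of_nat_power of_nat_sum)
  have pos: "real r ^ dcount y > 0" "real (dpaths 1 [] (s_word y)) > 0"
    using assms(1) dpaths_Nil_pos[of 1] by auto
  have "(\<Sum>w\<in>S_set r u. mu_fin r w y)
        = real (dpaths 1 [] u) * (r ^ dcount u * (\<Sum>w\<in>S_set r u. real (dpaths r w y)))
          / (r ^ dcount y * real (dpaths 1 [] (s_word y)))"
    unfolding mu_fin_def dpaths_Nil_eq_s_word[OF assms(2)]
    by (simp add: fibre sum_divide_distrib sum_distrib_left algebra_simps cong: sum.cong)
  also have "\<dots> = mu_fin 1 u (s_word y)"
    unfolding sum mu_fin_def using pos assms(1) by simp
  finally show ?thesis .
qed

section \<open>The weight \<open>\<pi>\<close>\<close>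

lemma eq_if_card_below_eq:
  fixes p q :: nat
  assumes "P p" "P q" "card {k. k < p \<and> P k} = card {k. k < q \<and> P k}"
  shows "p = q"
proof (rule ccontr)
  have False if "P a" "a < b" "card {k. k < a \<and> P k} = card {k. k < b \<and> P k}" for a b
  proof -
    have "insert a {k. k < a \<and> P k} \<subseteq> {k. k < b \<and> P k}"
      using that by auto
    then have "card (insert a {k. k < a \<and> P k}) \<le> card {k. k < b \<and> P k}"
      by (rule card_mono[rotated]) auto
    then show False
      using that(3) by simp
  qed
  moreover assume "p \<noteq> q"
  ultimately show False
    using assms by (metis linorder_neqE_nat)
qed

lemma ex_position_of_Two:
  "1 \<le> j \<Longrightarrow> j \<le> length (filter (\<lambda>l. l = Two) R) \<Longrightarrow>
     \<exists>p<length R. R ! p = Two \<and> card {k. k < p \<and> R ! k = Two} = j - 1"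
proof (induction R arbitrary: j rule: rev_induct)
  case (snoc l R)
  show ?case
  proof (cases "j \<le> length (filter (\<lambda>l. l = Two) R)")
    case True
    then obtain p where p: "p < length R" "R ! p = Two" "card {k. k < p \<and> R ! k = Two} = j - 1"
      using snoc by blast
    have "{k. k < p \<and> (R @ [l]) ! k = Two} = {k. k < p \<and> R ! k = Two}"
      using p(1) by (auto simp: nth_append)
    then show ?thesis
      using p by (intro exI[of _ p]) (auto simp: nth_append)
  next
    case False
    then have "l = Two" "j = Suc (length (filter (\<lambda>l. l = Two) R))"
      using snoc.prems by (auto split: if_splits)
    moreover have "{k. k < length R \<and> (R @ [l]) ! k = Two} = {k. k < length R \<and> R ! k = Two}"
      by (auto simp: nth_append)
    ultimately show ?thesis
      by (intro exI[of _ "length R"]) (auto simp: nth_append length_filter_conv_card)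
  qed
qed simp

lemma dcount_eq_length_filter_rev: "dcount x = length (filter (\<lambda>l. l = Two) (rev x))"
  by (simp add: dcount_def rev_filter[symmetric])

lemma twopos_fin_eq:
  assumes "p < length x" "rev x ! p = Two" "card {k. k < p \<and> rev x ! k = Two} = j - 1"
  shows "twopos_fin x j = p"
  unfolding twopos_fin_def
proof (rule the_equality)
  fix q
  assume "q < length x \<and> rev x ! q = Two \<and> card {k. k < q \<and> rev x ! k = Two} = j - 1"
  then show "q = p"
    using assms eq_if_card_below_eq[of "\<lambda>k. rev x ! k = Two" q p] by auto
qed (use assms in simp)

lemma sum_lval_rev_nth: "(\<Sum>k<length x. lval (rev x ! k)) = wsize x"
proof -
  have "(\<Sum>k<length x. lval (rev x ! k)) = sum_list (map lval (rev x))"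
    by (simp add: sum_list_sum_nth atLeast0LessThan)
  then show ?thesis
    by (simp add: wsize_def sum_list_rev rev_map[symmetric])
qed

lemma g_fin_Cons:
  assumes "1 \<le> j" "j \<le> dcount x"
  shows "g_fin (l # x) j = g_fin x j"
proof -
  obtain p where p: "p < length x" "rev x ! p = Two" "card {k. k < p \<and> rev x ! k = Two} = j - 1"
    using ex_position_of_Two[of j "rev x"] assms by (auto simp: dcount_eq_length_filter_rev)
  have "{k. k < p \<and> rev (l # x) ! k = Two} = {k. k < p \<and> rev x ! k = Two}"
    using p(1) by (auto simp: nth_append)
  then have "twopos_fin (l # x) j = p"
    using p by (intro twopos_fin_eq) (auto simp: nth_append)
  moreover have "(\<Sum>k\<le>p. lval (rev (l # x) ! k)) = (\<Sum>k\<le>p. lval (rev x ! k))"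
    using p(1) by (intro sum.cong) (auto simp: nth_append)
  ultimately show ?thesis
    unfolding g_fin_def twopos_fin_eq[OF p] by simp
qed

lemma g_fin_Cons_Two_last: "g_fin (Two # x) (Suc (dcount x)) = Suc (wsize x)"
proof -
  have "{k. k < length x \<and> rev (Two # x) ! k = Two} = {k. k < length (rev x) \<and> rev x ! k = Two}"
    by (auto simp: nth_append)
  then have "card {k. k < length x \<and> rev (Two # x) ! k = Two} = dcount x"
    by (simp add: length_filter_conv_card dcount_eq_length_filter_rev)
  then have pos: "twopos_fin (Two # x) (Suc (dcount x)) = length x"
    by (intro twopos_fin_eq) (auto simp: nth_append)
  have "(\<Sum>k\<le>length x. lval (rev (Two # x) ! k)) = (\<Sum>k<length x. lval (rev x ! k)) + 2"
    by (simp add: lessThan_Suc_atMost[symmetric] nth_append)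
  then show ?thesis
    unfolding g_fin_def pos by (simp add: sum_lval_rev_nth)
qed

lemma pi_fin_Nil [simp]: "pi_fin [] = 1"
proof -
  have "{j. 1 \<le> j \<and> j \<le> dcount [] \<and> g_fin [] j > 1} = {}"
    by auto
  then show ?thesis
    unfolding pi_fin_def by (simp only: prod.empty)
qed

lemma pi_fin_Cons_One: "pi_fin (One i # x) = pi_fin x"
proof -
  have "{j. 1 \<le> j \<and> j \<le> dcount (One i # x) \<and> g_fin (One i # x) j > 1}
        = {j. 1 \<le> j \<and> j \<le> dcount x \<and> g_fin x j > 1}"
    using g_fin_Cons by auto
  then show ?thesis
    unfolding pi_fin_def by (intro prod.cong) (auto simp: g_fin_Cons)
qed

lemma pi_fin_Cons_Two:
  "pi_fin (Two # x) = (if 1 \<le> wsize x then real (wsize x) / real (Suc (wsize x)) else 1) * pi_fin x"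
proof -
  let ?J = "{j. 1 \<le> j \<and> j \<le> dcount x \<and> g_fin x j > 1}"
  let ?new = "if 1 \<le> wsize x then {Suc (dcount x)} else {}"
  let ?f = "\<lambda>y j. (real (g_fin y j) - 1) / real (g_fin y j)"
  have "{j. 1 \<le> j \<and> j \<le> dcount (Two # x) \<and> g_fin (Two # x) j > 1} = ?J \<union> ?new"
    using g_fin_Cons[of _ x Two] g_fin_Cons_Two_last[of x] by (auto simp: le_Suc_eq)
  then have "pi_fin (Two # x) = (\<Prod>j\<in>?J. ?f (Two # x) j) * (\<Prod>j\<in>?new. ?f (Two # x) j)"
    unfolding pi_fin_def by (simp add: prod.union_disjoint)
  also have "(\<Prod>j\<in>?J. ?f (Two # x) j) = pi_fin x"
    unfolding pi_fin_def by (intro prod.cong) (auto simp: g_fin_Cons)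
  finally show ?thesis
    by (simp add: g_fin_Cons_Two_last)
qed

lemma pi_fin_pos: "0 < pi_fin x"
proof (induction x)
  case (Cons l x)
  then show ?case by (cases l) (auto simp: pi_fin_Cons_One pi_fin_Cons_Two)
qed simp

lemma pi_fin_le_1: "pi_fin x \<le> 1"
proof (induction x)
  case (Cons l x)
  then show ?case
    using pi_fin_pos[of x] by (cases l) (auto simp: pi_fin_Cons_One pi_fin_Cons_Two mult_le_one)
qed simp

lemma pi_fin_s_word: "pi_fin (s_word x) = pi_fin x"
proof (induction x)
  case (Cons l x)
  then show ?case by (cases l) (auto simp: pi_fin_Cons_One pi_fin_Cons_Two)
qed simp

definition isuffix :: "iword \<Rightarrow> nat \<Rightarrow> word" where
  "isuffix v k = rev (map v [0..<k])"

lemma length_isuffix [simp]: "length (isuffix v k) = k"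
  by (simp add: isuffix_def)

lemma rev_isuffix_nth: "p < k \<Longrightarrow> rev (isuffix v k) ! p = v p"
  by (simp add: isuffix_def)

lemma isuffix_0 [simp]: "isuffix v 0 = []"
  by (simp add: isuffix_def)

lemma isuffix_Suc: "isuffix v (Suc k) = v k # isuffix v k"
  by (simp add: isuffix_def)

lemma wsize_isuffix_ge: "k \<le> wsize (isuffix v k)"
  using wsize_ge_length[of "isuffix v k"] by simp

lemma wf_word_isuffix: "wf_iword r v \<Longrightarrow> wf_word r (isuffix v k)"
  by (induction k) (auto simp: isuffix_Suc wf_iword_def)

lemma pi_inf_s_iword: "pi_inf (s_iword v) = pi_inf v"
proof -
  have Two: "(s_iword v p = Two) = (v p = Two)" and lval: "lval (s_iword v p) = lval (v p)" for p
    by (simp_all add: s_iword_def)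
  have "twopos_inf (s_iword v) = twopos_inf v"
    unfolding twopos_inf_def Two ..
  moreover have "has_two_inf (s_iword v) = has_two_inf v"
    unfolding has_two_inf_def Two ..
  ultimately show ?thesis
    unfolding pi_inf_def g_inf_def lval by simp
qed

definition pi_partial :: "iword \<Rightarrow> nat \<Rightarrow> real" where
  "pi_partial v N = (\<Prod>j\<in>{j. j \<le> N \<and> has_two_inf v j \<and> g_inf v j > 1}.
                        (real (g_inf v j) - 1) / real (g_inf v j))"

lemma pi_partial_Suc:
  "pi_partial v (Suc N) = pi_partial v N * (if has_two_inf v (Suc N) \<and> g_inf v (Suc N) > 1
      then (real (g_inf v (Suc N)) - 1) / real (g_inf v (Suc N)) else 1)"
proof -
  let ?S = "\<lambda>N. {j. j \<le> N \<and> has_two_inf v j \<and> g_inf v j > 1}"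
  have "?S (Suc N) = ?S N \<union> (if has_two_inf v (Suc N) \<and> g_inf v (Suc N) > 1 then {Suc N} else {})"
    by (auto simp: le_Suc_eq)
  moreover have "finite (?S N)"
    by (rule finite_subset[of _ "{..N}"]) auto
  ultimately show ?thesis
    unfolding pi_partial_def by (simp add: prod.union_disjoint)
qed

lemma pi_partial_nonneg: "0 \<le> pi_partial v N"
  unfolding pi_partial_def by (rule prod_nonneg) auto

lemma decseq_pi_partial: "decseq (pi_partial v)"
proof (rule decseq_SucI)
  fix N
  have "pi_partial v N * (if has_two_inf v (Suc N) \<and> g_inf v (Suc N) > 1
      then (real (g_inf v (Suc N)) - 1) / real (g_inf v (Suc N)) else 1) \<le> pi_partial v N"
    using pi_partial_nonneg[of v N] by (intro mult_left_le) auto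
  then show "pi_partial v (Suc N) \<le> pi_partial v N"
    by (simp add: pi_partial_Suc)
qed

lemma pi_partial_tendsto: "pi_partial v \<longlonglongrightarrow> pi_inf v"
proof -
  have "convergent (pi_partial v)"
  proof (rule Bseq_monoseq_convergent)
    show "Bseq (pi_partial v)"
      using decseqD[OF decseq_pi_partial, of 0] pi_partial_nonneg by (intro BseqI') auto
    show "monoseq (pi_partial v)"
      using decseq_pi_partial by (simp add: decseq_imp_monoseq)
  qed
  then show ?thesis
    unfolding pi_inf_def pi_partial_def[symmetric] by (simp add: convergent_LIMSEQ_iff)
qed

lemma pi_inf_nonneg: "0 \<le> pi_inf v"
  by (rule LIMSEQ_le_const[OF pi_partial_tendsto]) (simp add: pi_partial_nonneg)

lemma g_inf_eq_g_fin_isuffix: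
  assumes "1 \<le> j" "j \<le> dcount (isuffix v k)"
  shows "has_two_inf v j \<and> g_inf v j = g_fin (isuffix v k) j"
proof -
  obtain p where p: "p < k" "rev (isuffix v k) ! p = Two"
      "card {q. q < p \<and> rev (isuffix v k) ! q = Two} = j - 1"
    using ex_position_of_Two[of j "rev (isuffix v k)"] assms
    by (auto simp: dcount_eq_length_filter_rev)
  have vp: "v p = Two"
    using p rev_isuffix_nth by metis
  have below: "{q. q < p \<and> rev (isuffix v k) ! q = Two} = {q. q < p \<and> v q = Two}"
    using p(1) rev_isuffix_nth[of _ k v] by auto
  have "twopos_inf v j = p"
    unfolding twopos_inf_def
  proof (rule the_equality)
    fix q
    assume "v q = Two \<and> card {k. k < q \<and> v k = Two} = j - 1"
    then show "q = p"
      using vp p(3) below eq_if_card_below_eq[of "\<lambda>k. v k = Two" q p] by auto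
  qed (use vp p(3) below in simp)
  moreover have "twopos_fin (isuffix v k) j = p"
    using p by (intro twopos_fin_eq) auto
  moreover have "(\<Sum>q\<le>p. lval (v q)) = (\<Sum>q\<le>p. lval (rev (isuffix v k) ! q))"
    using p(1) by (intro sum.cong) (auto simp: rev_isuffix_nth)
  moreover have "has_two_inf v j"
    unfolding has_two_inf_def using assms vp p(3) below by auto
  ultimately show ?thesis
    unfolding g_inf_def g_fin_def by simp
qed

lemma pi_partial_isuffix: "pi_partial v (dcount (isuffix v k)) = pi_fin (isuffix v k)"
proof -
  let ?J = "{j. 1 \<le> j \<and> j \<le> dcount (isuffix v k) \<and> g_fin (isuffix v k) j > 1}"
  have J: "{j. j \<le> dcount (isuffix v k) \<and> has_two_inf v j \<and> g_inf v j > 1} = ?J"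
    using g_inf_eq_g_fin_isuffix[of _ v k] by (auto simp: has_two_inf_def)
  have "(real (g_inf v j) - 1) / real (g_inf v j)
        = (real (g_fin (isuffix v k) j) - 1) / real (g_fin (isuffix v k) j)" if "j \<in> ?J" for j
    using that g_inf_eq_g_fin_isuffix[of j v k] by simp
  then show ?thesis
    unfolding pi_partial_def pi_fin_def J by (rule prod.cong[OF refl])
qed

lemma pi_inf_le_pi_fin_isuffix: "pi_inf v \<le> pi_fin (isuffix v k)"
  using decseq_ge[OF decseq_pi_partial pi_partial_tendsto] pi_partial_isuffix by metis

section \<open>Admissible sequences\<close>

definition admissible :: "nat \<Rightarrow> iword \<Rightarrow> real \<Rightarrow> (nat \<Rightarrow> word) \<Rightarrow> bool" where
  "admissible r v \<beta> vs \<longleftrightarrow> (\<forall>n. wf_word r (vs n)) \<and> letterwise vs v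
        \<and> (\<lambda>n. pi_fin (vs n)) \<longlonglongrightarrow> \<beta> * pi_inf v"

lemma mu_eqI:
  assumes "\<exists>vs. admissible r v \<beta> vs"
    and "\<And>vs. admissible r v \<beta> vs \<Longrightarrow> (\<lambda>n. mu_fin r w (vs n)) \<longlonglongrightarrow> L"
  shows "mu r v \<beta> w = L"
proof -
  have mu: "mu r v \<beta> w = (THE L. \<forall>vs. admissible r v \<beta> vs \<longrightarrow> (\<lambda>n. mu_fin r w (vs n)) \<longlonglongrightarrow> L)"
    unfolding mu_def admissible_def mu_fin_def ..
  obtain vs where "admissible r v \<beta> vs"
    using assms(1) by blast
  then show ?thesis
    unfolding mu using assms(2) LIMSEQ_unique by (intro the_equality) blast+
qed

lemma wsize_replicate_Two [simp]: "wsize (replicate m Two) = 2 * m"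
  by (induction m) auto

lemma pi_fin_replicate_Two_Suc:
  assumes "1 \<le> wsize t"
  shows "pi_fin (replicate (Suc m) Two @ t)
           = real (2 * m + wsize t) / real (2 * m + wsize t + 1) * pi_fin (replicate m Two @ t)"
  using assms by (simp add: pi_fin_Cons_Two)

lemma pi_fin_replicate_Two_sq_le:
  assumes "1 \<le> wsize t"
  shows "(pi_fin (replicate m Two @ t))\<^sup>2 \<le> real (wsize t) / real (wsize t + 2 * m)"
proof (induction m)
  case 0
  have "(pi_fin t)\<^sup>2 \<le> 1"
    using pi_fin_le_1[of t] pi_fin_pos[of t] by (simp add: power_le_one)
  moreover have "t \<noteq> []"
    using assms by auto
  ultimately show ?case
    by simp
next
  case (Suc m)
  define W where "W = real (2 * m + wsize t)"
  have W: "1 \<le> W"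
    using assms by (simp add: W_def)
  have "(pi_fin (replicate (Suc m) Two @ t))\<^sup>2 = (W / (W + 1))\<^sup>2 * (pi_fin (replicate m Two @ t))\<^sup>2"
    using pi_fin_replicate_Two_Suc[OF assms, of m]
    by (simp add: W_def power_mult_distrib power_divide add.commute)
  also have "\<dots> \<le> (W / (W + 1))\<^sup>2 * (real (wsize t) / W)"
    using Suc by (intro mult_left_mono) (auto simp: W_def algebra_simps)
  also have "\<dots> = real (wsize t) * (W / (W + 1)\<^sup>2)"
    using W by (simp add: power_divide power2_eq_square)
  also have "\<dots> \<le> real (wsize t) * (1 / (W + 2))"
  proof -
    have "W / (W + 1)\<^sup>2 \<le> 1 / (W + 2)"
      using W by (simp add: divide_simps power2_eq_square) (simp add: algebra_simps)
    then show ?thesis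
      by (intro mult_left_mono) auto
  qed
  also have "\<dots> = real (wsize t) / real (wsize t + 2 * Suc m)"
    by (simp add: W_def)
  finally show ?case .
qed

lemma ex_pi_fin_replicate_Two_le:
  assumes "1 \<le> wsize t" "0 < \<tau>"
  shows "\<exists>m. pi_fin (replicate m Two @ t) \<le> \<tau>"
proof -
  define s where "s = real (wsize t)"
  have s: "1 \<le> s"
    using assms s_def by simp
  obtain m :: nat where m: "s / \<tau>\<^sup>2 \<le> real m"
    using real_arch_simple by blast
  have m_pos: "0 < real m"
    using m s assms(2) by (smt (verit) divide_pos_pos zero_less_power)
  have "s / (s + 2 * real m) \<le> s / (2 * real m)"
    using s m_pos by (intro divide_left_mono) auto
  also have "\<dots> \<le> \<tau>\<^sup>2 / 2"
    using m m_pos assms(2) by (simp add: field_simps)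
  also have "\<dots> < \<tau>\<^sup>2"
    using assms(2) by simp
  finally have "(pi_fin (replicate m Two @ t))\<^sup>2 < \<tau>\<^sup>2"
    using pi_fin_replicate_Two_sq_le[OF assms(1), of m] s_def by simp
  then have "pi_fin (replicate m Two @ t) < \<tau>"
    using assms(2) pi_fin_pos by (smt (verit) power_mono)
  then show ?thesis
    by (blast intro: less_imp_le)
qed

lemma pi_fin_least_replicate_Two:
  assumes t: "Suc n \<le> wsize t" and \<tau>: "0 < \<tau>" "\<tau> \<le> pi_fin t"
  defines "m \<equiv> LEAST m. pi_fin (replicate m Two @ t) \<le> \<tau>"
  shows "\<tau> * (1 + - inverse (real (Suc n))) \<le> pi_fin (replicate m Two @ t)"
    and "pi_fin (replicate m Two @ t) \<le> \<tau>"
proof -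
  have "\<exists>m. pi_fin (replicate m Two @ t) \<le> \<tau>"
    using ex_pi_fin_replicate_Two_le[OF _ \<tau>(1), of t] t by simp
  then show "pi_fin (replicate m Two @ t) \<le> \<tau>"
    unfolding m_def by (rule LeastI_ex)
  show "\<tau> * (1 + - inverse (real (Suc n))) \<le> pi_fin (replicate m Two @ t)"
  proof (cases m)
    case 0
    have "\<tau> * (1 + - inverse (real (Suc n))) \<le> \<tau>"
      using \<tau>(1) by (intro mult_left_le) auto
    with 0 \<tau>(2) show ?thesis
      by simp
  next
    case (Suc m')
    define W where "W = real (2 * m' + wsize t)"
    have W: "0 < W + 1"
      by (simp add: W_def)
    have above: "\<tau> < pi_fin (replicate m' Two @ t)"
      using not_less_Least[of m' "\<lambda>m. pi_fin (replicate m Two @ t) \<le> \<tau>"] Suc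
      unfolding m_def by (simp add: not_le)
    have "inverse (W + 1) \<le> inverse (real (Suc n))"
      using t by (intro le_imp_inverse_le) (simp_all add: W_def)
    moreover have "W / (W + 1) = 1 - inverse (W + 1)"
      using W by (simp add: field_simps)
    ultimately have factor: "1 + - inverse (real (Suc n)) \<le> W / (W + 1)"
      by linarith
    have "inverse (real (Suc n)) \<le> 1"
      by (simp add: inverse_le_1_iff)
    then have factor_nonneg: "0 \<le> 1 + - inverse (real (Suc n))"
      by linarith
    have "\<tau> * (1 + - inverse (real (Suc n))) \<le> pi_fin (replicate m' Two @ t) * (W / (W + 1))"
      by (rule mult_mono[OF less_imp_le[OF above] factor less_imp_le[OF pi_fin_pos] factor_nonneg])
    moreover have "pi_fin (replicate m Two @ t) = W / (W + 1) * pi_fin (replicate m' Two @ t)"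
      using pi_fin_replicate_Two_Suc[of t m'] t by (simp add: Suc W_def)
    ultimately show ?thesis
      by (simp add: mult.commute)
  qed
qed

lemma letterwise_append_isuffix: "letterwise (\<lambda>n. p n @ isuffix v (Suc n)) v"
  unfolding letterwise_def
proof
  fix k
  show "\<forall>\<^sub>F n in sequentially. k \<le> length (p n @ isuffix v (Suc n))
          \<and> (\<forall>q<k. rev (p n @ isuffix v (Suc n)) ! q = v q)"
    by (rule eventually_sequentiallyI[of k]) (auto simp: nth_append rev_isuffix_nth)
qed

lemma ex_admissible:
  assumes "wf_iword r v" "0 < \<beta>" "\<beta> \<le> 1" "0 < pi_inf v"
  shows "\<exists>vs. admissible r v \<beta> vs"
proof -
  define \<tau> where "\<tau> = \<beta> * pi_inf v"
  have "\<beta> * pi_inf v \<le> pi_inf v"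
    using assms mult_right_mono[of \<beta> 1 "pi_inf v"] pi_inf_nonneg[of v] by simp
  then have \<tau>: "0 < \<tau>" "\<tau> \<le> pi_fin (isuffix v k)" for k
    using assms order_trans[OF _ pi_inf_le_pi_fin_isuffix[of v k]] unfolding \<tau>_def by auto
  define M where "M n = (LEAST m. pi_fin (replicate m Two @ isuffix v (Suc n)) \<le> \<tau>)" for n
  define vs where "vs n = replicate (M n) Two @ isuffix v (Suc n)" for n
  note bounds = pi_fin_least_replicate_Two[OF wsize_isuffix_ge \<tau>]
  have "(\<lambda>n. pi_fin (vs n)) \<longlonglongrightarrow> \<tau>"
  proof (rule tendsto_sandwich[OF _ _ LIMSEQ_inverse_real_of_nat_add_minus_mult tendsto_const])
    show "\<forall>\<^sub>F n in sequentially. \<tau> * (1 + - inverse (real (Suc n))) \<le> pi_fin (vs n)"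
      by (rule always_eventually) (use bounds(1) in \<open>simp add: vs_def M_def\<close>)
    show "\<forall>\<^sub>F n in sequentially. pi_fin (vs n) \<le> \<tau>"
      by (rule always_eventually) (use bounds(2) in \<open>simp add: vs_def M_def\<close>)
  qed
  moreover have "wf_word r (vs n)" for n
    using wf_word_isuffix[OF assms(1)] by (simp add: vs_def wf_word_def[of r "replicate _ _"])
  moreover have "letterwise vs v"
    unfolding vs_def by (rule letterwise_append_isuffix)
  ultimately show ?thesis
    unfolding admissible_def \<tau>_def by blast
qed

lemma admissible_s_word:
  assumes "admissible r v \<beta> vs"
  shows "admissible 1 (s_iword v) \<beta> (\<lambda>n. s_word (vs n))"
proof -
  have "letterwise (\<lambda>n. s_word (vs n)) (s_iword v)"
    using assms unfolding admissible_def letterwise_def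
    by (auto elim!: eventually_mono simp: rev_map s_iword_def s_word_def)
  moreover have "(\<lambda>n. pi_fin (s_word (vs n))) \<longlonglongrightarrow> \<beta> * pi_inf (s_iword v)"
    using assms by (simp add: admissible_def pi_fin_s_word pi_inf_s_iword)
  ultimately show ?thesis
    unfolding admissible_def using wf_word_s_word by blast
qed

definition lift_word :: "iword \<Rightarrow> word \<Rightarrow> word" where
  "lift_word v y = rev (map (\<lambda>p. if rev y ! p = Two then Two else if v p = Two then One 1 else v p)
                             [0..<length y])"

lemma length_lift_word [simp]: "length (lift_word v y) = length y"
  by (simp add: lift_word_def)

lemma rev_lift_word_nth:
  "p < length y \<Longrightarrow>
     rev (lift_word v y) ! p = (if rev y ! p = Two then Two else if v p = Two then One 1 else v p)"
  by (simp add: lift_word_def)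

lemma s_word_lift_word:
  assumes "wf_word 1 y"
  shows "s_word (lift_word v y) = y"
proof -
  have "rev (s_word (lift_word v y)) ! p = rev y ! p" if p: "p < length y" for p
  proof -
    have "letter_ok 1 (rev y ! p)"
      using assms p by (simp add: wf_word_def rev_nth)
    then show ?thesis
      using p by (cases "rev y ! p"; cases "v p") (auto simp: rev_map s_word_def rev_lift_word_nth)
  qed
  then have "rev (s_word (lift_word v y)) = rev y"
    by (intro nth_equalityI) (simp_all add: s_word_def)
  then show ?thesis
    by simp
qed

lemma wf_word_lift_word:
  assumes "1 \<le> r" "wf_iword r v"
  shows "wf_word r (lift_word v y)"
  using assms by (auto simp: wf_word_def lift_word_def wf_iword_def)

lemma admissible_lift_word:
  assumes "1 \<le> r" "wf_iword r v" "admissible 1 (s_iword v) \<beta> us"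
  shows "admissible r v \<beta> (\<lambda>n. lift_word v (us n))"
proof -
  have wf: "wf_word 1 (us n)" for n
    using assms(3) by (simp add: admissible_def)
  have "rev (lift_word v (us n)) ! p = v p"
    if "p < length (us n)" "rev (us n) ! p = s_iword v p" for n p
    using that by (cases "v p") (auto simp: rev_lift_word_nth s_iword_def)
  then have "letterwise (\<lambda>n. lift_word v (us n)) v"
    using assms(3) unfolding admissible_def letterwise_def
    by (auto elim!: eventually_mono)
  moreover have "pi_fin (lift_word v (us n)) = pi_fin (us n)" for n
    using pi_fin_s_word[of "lift_word v (us n)"] s_word_lift_word[OF wf] by simp
  ultimately show ?thesis
    using assms wf_word_lift_word unfolding admissible_def by (simp add: pi_inf_s_iword)
qed

section \<open>Convergence of the finite measures\<close>

definition npaths :: "nat \<Rightarrow> word \<Rightarrow> word \<Rightarrow> real" where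
  "npaths r w y = real (dpaths r w y) / real (dpaths r [] y)"

lemma mu_fin_eq_npaths: "mu_fin r w y = real (dpaths r [] w) * npaths r w y"
  by (simp add: mu_fin_def npaths_def)

lemma npaths_Nil: "1 \<le> r \<Longrightarrow> npaths r [] y = 1"
  using dpaths_Nil_pos[of r y] by (simp add: npaths_def)

lemma npaths_Cons_One: "wsize w \<le> wsize x \<Longrightarrow> npaths r w (One i # x) = npaths r w x"
  by (auto simp: npaths_def dpaths_Cons_One)

lemma npaths_Cons_Two:
  assumes "1 \<le> r" "wf_word r w" "w \<noteq> []"
  shows "npaths r w (Two # x) = (1 - real (wsize w) / (real (wsize x) + 1)) * npaths r w x
                                 + (1 / real r) / (real (wsize x) + 1) * npaths r (tl w) x"
proof -
  have num: "real (dpaths r w (Two # x))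
        = real r * (real (wsize x) + 1 - real (wsize w)) * real (dpaths r w x) + real (dpaths r (tl w) x)"
    using arg_cong[OF dpaths_Cons_Two[OF assms(2), of x], of real] assms(3)
    by (simp add: algebra_simps)
  have den: "real (dpaths r [] (Two # x)) = real r * (real (wsize x) + 1) * real (dpaths r [] x)"
    by (simp add: dpaths_Nil_Cons_Two algebra_simps)
  have "(R * (S - a) * d + e) / (R * S * D) = (1 - a / S) * (d / D) + (1 / R) / S * (e / D)"
    if "R > 0" "S > 0" "D > 0" for R S D a d e :: real
    using that by (simp add: field_simps)
  moreover have "real r > 0" "real (dpaths r [] x) > 0"
    using assms(1) dpaths_Nil_pos[OF assms(1)] by auto
  ultimately show ?thesis
    unfolding npaths_def num den by simp
qed

fun twoprod :: "word \<Rightarrow> word \<Rightarrow> real \<Rightarrow> real" where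
  "twoprod [] z a = 1"
| "twoprod (One i # q) z a = twoprod q z a"
| "twoprod (Two # q) z a = (1 - a / (real (wsize (q @ z)) + 1)) * twoprod q z a"

lemma twoprod_append: "twoprod (q @ m) z a = twoprod q (m @ z) a * twoprod m z a"
proof (induction q)
  case (Cons l q)
  then show ?case by (cases l) auto
qed simp

lemma twoprod_0 [simp]: "twoprod q z 0 = 1"
proof (induction q)
  case (Cons l q)
  then show ?case by (cases l) auto
qed simp

lemma pi_fin_append: "1 \<le> wsize z \<Longrightarrow> pi_fin (q @ z) = twoprod q z 1 * pi_fin z"
proof (induction q)
  case (Cons l q)
  moreover have "real (wsize (q @ z)) / real (Suc (wsize (q @ z))) = 1 - 1 / (real (wsize (q @ z)) + 1)"
    by (simp add: field_simps)
  ultimately show ?case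
    by (cases l) (auto simp: pi_fin_Cons_One pi_fin_Cons_Two)
qed simp

lemma lincomb_Cons_Two:
  fixes c D :: real
  assumes "finite I" "t \<notin> I" and B: "\<And>i. i \<in> I \<Longrightarrow> c * B' i = B i * (a t - a i)"
  shows "(1 - a t / D) * (\<Sum>i\<in>insert t I. B i * F i) + c / D * (\<Sum>i\<in>I. B' i * F i)
           = (\<Sum>i\<in>insert t I. B i * ((1 - a i / D) * F i))"
proof -
  have "(1 - a t / D) * (B i * F i) + c / D * (B' i * F i) = B i * ((1 - a i / D) * F i)" if "i \<in> I" for i
  proof -
    have "c / D * (B' i * F i) = B i * (a t - a i) / D * F i"
      using B[OF that] by (simp add: mult.assoc[symmetric])
    then show ?thesis
      by (simp add: algebra_simps diff_divide_distrib)
  qed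
  then have sum_I: "(1 - a t / D) * (\<Sum>i\<in>I. B i * F i) + c / D * (\<Sum>i\<in>I. B' i * F i)
                      = (\<Sum>i\<in>I. B i * ((1 - a i / D) * F i))"
    unfolding sum_distrib_left sum.distrib[symmetric] by (rule sum.cong[OF refl])
  have "(1 - a t / D) * (\<Sum>i\<in>insert t I. B i * F i) + c / D * (\<Sum>i\<in>I. B' i * F i)
          = (1 - a t / D) * (B t * F t)
            + ((1 - a t / D) * (\<Sum>i\<in>I. B i * F i) + c / D * (\<Sum>i\<in>I. B' i * F i))"
    using assms(1,2) by (simp add: distrib_left add.assoc)
  also have "\<dots> = (\<Sum>i\<in>insert t I. B i * ((1 - a i / D) * F i))"
    unfolding sum_I using assms(1,2) by (simp add: mult.left_commute)
  finally show ?thesis .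
qed

lemma lincomb_twoprod_step:
  fixes K K' :: "word \<Rightarrow> real"
  assumes "finite I" "t \<notin> I" and a: "\<And>i. i \<in> I \<Longrightarrow> a i \<noteq> a t"
    and K': "\<And>p. K' p = (\<Sum>i\<in>I. B' i * twoprod p x (a i))"
    and K_One: "\<And>i p. K (One i # p) = K p"
    and K_Two: "\<And>p. K (Two # p) = (1 - a t / (real (wsize (p @ x)) + 1)) * K p
                                  + c / (real (wsize (p @ x)) + 1) * K' p"
  shows "\<exists>B. \<forall>p. K p = (\<Sum>i\<in>insert t I. B i * twoprod p x (a i))"
proof -
  define B where "B i = (if i = t then K [] - (\<Sum>j\<in>I. c * B' j / (a t - a j)) else c * B' i / (a t - a i))"
    for i
  have B: "c * B' i = B i * (a t - a i)" if "i \<in> I" for i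
    using that a[OF that] assms(2) by (auto simp: B_def)
  have "K p = (\<Sum>i\<in>insert t I. B i * twoprod p x (a i))" for p
  proof (induction p)
    case Nil
    have "(\<Sum>i\<in>I. B i) = (\<Sum>j\<in>I. c * B' j / (a t - a j))"
      using assms(2) by (intro sum.cong) (auto simp: B_def)
    then show ?case
      using assms(1,2) by (simp add: B_def)
  next
    case (Cons l p)
    then show ?case
      using lincomb_Cons_Two[where B = B and B' = B' and a = a, OF assms(1,2) B]
      by (cases l) (simp_all add: K_One K_Two K')
  qed
  then show ?thesis
    by blast
qed

lemma wsize_drop_less:
  assumes "t < i" "i \<le> length w"
  shows "wsize (drop i w) < wsize (drop t w)"
proof -
  have "drop t w = take (i - t) (drop t w) @ drop i w"
    using assms by (metis append_take_drop_id drop_drop le_add_diff_inverse2 less_imp_le)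
  moreover have "take (i - t) (drop t w) \<noteq> []"
    using assms by simp
  ultimately show ?thesis
    by (metis wsize_append wsize_eq_0_iff less_add_same_cancel2 not_gr_zero)
qed

lemma wsize_drop_le: "wsize (drop t w) \<le> wsize w"
  by (metis append_take_drop_id le_add2 wsize_append)

lemma npaths_lincomb:
  assumes r: "1 \<le> r" and w: "wf_word r w" and wx: "wsize w \<le> wsize x"
  shows "\<exists>B. \<forall>p. npaths r w (p @ x) = (\<Sum>i=0..length w. B i * twoprod p x (real (wsize (drop i w))))"
proof -
  define a where "a i = real (wsize (drop i w))" for i
  have "\<exists>B. \<forall>p. npaths r (drop t w) (p @ x) = (\<Sum>i=t..length w. B i * twoprod p x (a i))"
    if "t \<le> length w" for t
    using that
  proof (induction t rule: inc_induct)
    case base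
    show ?case
      using r by (intro exI[of _ "\<lambda>_. 1"]) (simp add: a_def npaths_Nil)
  next
    case (step t)
    then obtain B' where B': "\<And>p. npaths r (drop (Suc t) w) (p @ x)
                                     = (\<Sum>i=Suc t..length w. B' i * twoprod p x (a i))"
      by blast
    have small: "wsize (drop t w) \<le> wsize (p @ x)" for p
      using wsize_drop_le[of t w] wx by simp
    have "wf_word r (drop t w)" "drop t w \<noteq> []" "tl (drop t w) = drop (Suc t) w"
      using w step(2) by (auto simp: wf_word_def drop_Suc tl_drop dest: in_set_dropD)
    note Two = npaths_Cons_Two[OF r this(1,2)]
    have "a i \<noteq> a t" if "i \<in> {Suc t..length w}" for i
      using wsize_drop_less[of t i w] that by (simp add: a_def)
    then have "\<exists>B. \<forall>p. npaths r (drop t w) (p @ x) = (\<Sum>i\<in>insert t {Suc t..length w}. B i * twoprod p x (a i))"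
      using B' small
      by (intro lincomb_twoprod_step[where c = "1 / real r"])
        (auto simp: a_def Two npaths_Cons_One \<open>tl (drop t w) = drop (Suc t) w\<close>)
    moreover have "insert t {Suc t..length w} = {t..length w}"
      using step(2) by auto
    ultimately show ?case
      by simp
  qed
  then show ?thesis
    by (force simp: a_def)
qed

lemma twoprod_bounds:
  assumes "0 \<le> a" "a \<le> real (wsize z) + 1"
  shows "0 \<le> twoprod q z a" "twoprod q z a \<le> 1"
proof -
  have "0 \<le> twoprod q z a \<and> twoprod q z a \<le> 1"
  proof (induction q)
    case (Cons l q)
    have "0 \<le> 1 - a / (real (wsize (q @ z)) + 1)" "1 - a / (real (wsize (q @ z)) + 1) \<le> 1"
      using assms by (auto simp: field_simps)
    with Cons show ?case
      by (cases l) (auto intro: mult_le_one)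
  qed simp
  then show "0 \<le> twoprod q z a" "twoprod q z a \<le> 1"
    by blast+
qed

lemma twoprod_pos:
  assumes "0 \<le> a" "a < real (wsize z) + 1"
  shows "0 < twoprod q z a"
proof (induction q)
  case (Cons l q)
  have "0 < 1 - a / (real (wsize (q @ z)) + 1)"
    using assms by (auto simp: field_simps)
  with Cons show ?case
    by (cases l) auto
qed simp

lemma twoprod_le_power:
  assumes "real a \<le> real (wsize z) + 1"
  shows "twoprod q z (real a) \<le> twoprod q z 1 ^ a"
proof (induction q)
  case (Cons l q)
  define y where "y = 1 / (real (wsize (q @ z)) + 1)"
  have y: "0 \<le> y" "y \<le> 1"
    by (auto simp: y_def field_simps)
  have "0 \<le> 1 - real a * y"
    using assms by (auto simp: y_def field_simps)
  moreover have "1 - real a * y \<le> (1 - y) ^ a"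
    using Bernoulli_inequality[of "- y" a] y by simp
  ultimately have "(1 - real a * y) * twoprod q z (real a) \<le> (1 - y) ^ a * twoprod q z 1 ^ a"
    using Cons twoprod_bounds(1)[of "real a" z q] assms by (intro mult_mono) auto
  then show ?case
    by (cases l) (auto simp: y_def power_mult_distrib Cons)
qed simp

lemma twoprod_ge_powr:
  assumes "2 * real a \<le> real (wsize z) + 1" "1 \<le> wsize z"
  shows "twoprod q z 1 powr (real a + 2 * real a ^ 2 / (real (wsize z) + 1)) \<le> twoprod q z (real a)"
proof (induction q)
  case (Cons l q)
  define e where "e = real a + 2 * real a ^ 2 / (real (wsize z) + 1)"
  define y where "y = 1 / (real (wsize (q @ z)) + 1)"
  have y: "0 < y" "y \<le> 1 / (real (wsize z) + 1)" "y < 1"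
    using assms(2) by (auto simp: y_def field_simps)
  have ay: "real a * y \<le> 1 / 2"
  proof -
    have "real a * y \<le> real a * (1 / (real (wsize z) + 1))"
      using y by (intro mult_left_mono) auto
    also have "\<dots> \<le> 1 / 2"
      using assms(1) by (simp add: field_simps)
    finally show ?thesis .
  qed
  have "e * ln (1 - y) \<le> e * (- y)"
    using ln_one_minus_pos_upper_bound[of y] y by (intro mult_left_mono) (auto simp: e_def)
  also have "\<dots> \<le> - (real a * y) - 2 * (real a * y)\<^sup>2"
  proof -
    have "2 * real a ^ 2 * y * y \<le> 2 * real a ^ 2 * y * (1 / (real (wsize z) + 1))"
      using y by (intro mult_left_mono) auto
    then show ?thesis
      by (simp add: e_def power2_eq_square algebra_simps)
  qed
  also have "\<dots> \<le> ln (1 - real a * y)"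
    using ln_one_minus_pos_lower_bound[of "real a * y"] ay y by simp
  finally have "(1 - y) powr e \<le> 1 - real a * y"
    using y ay by (simp add: powr_def ln_ge_iff)
  then have "((1 - y) * twoprod q z 1) powr e \<le> (1 - real a * y) * twoprod q z (real a)"
    using Cons y ay by (simp add: powr_mult e_def[symmetric]) (intro mult_mono; simp)
  then show ?case
    by (cases l) (auto simp: y_def e_def Cons)
qed simp

lemma tendsto_squeeze_family:
  fixes f :: "nat \<Rightarrow> real"
  assumes bounds: "\<And>j. J \<le> j \<Longrightarrow> eventually (\<lambda>n. lo j n \<le> f n \<and> f n \<le> hi j n) sequentially"
    and lo: "\<And>j. J \<le> j \<Longrightarrow> lo j \<longlonglongrightarrow> Lo j" and hi: "\<And>j. J \<le> j \<Longrightarrow> hi j \<longlonglongrightarrow> Hi j"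
    and "Lo \<longlonglongrightarrow> L" "Hi \<longlonglongrightarrow> L"
  shows "f \<longlonglongrightarrow> L"
proof (rule order_tendstoI)
  fix b
  assume "b < L"
  then obtain N where "\<And>j. N \<le> j \<Longrightarrow> b < Lo j"
    using order_tendstoD(1)[OF \<open>Lo \<longlonglongrightarrow> L\<close>] by (auto simp: eventually_sequentially)
  then have "eventually (\<lambda>n. b < lo (max N J) n) sequentially"
    using order_tendstoD(1)[OF lo[OF max.cobounded2]] by simp
  then show "eventually (\<lambda>n. b < f n) sequentially"
    using bounds[of "max N J"] by (auto elim: eventually_elim2)
next
  fix b
  assume "L < b"
  then obtain N where "\<And>j. N \<le> j \<Longrightarrow> Hi j < b"
    using order_tendstoD(2)[OF \<open>Hi \<longlonglongrightarrow> L\<close>] by (auto simp: eventually_sequentially)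
  then have "eventually (\<lambda>n. hi (max N J) n < b) sequentially"
    using order_tendstoD(2)[OF hi[OF max.cobounded2]] by simp
  then show "eventually (\<lambda>n. f n < b) sequentially"
    using bounds[of "max N J"] by (auto elim: eventually_elim2)
qed

definition iseg :: "iword \<Rightarrow> nat \<Rightarrow> nat \<Rightarrow> word" where
  "iseg v n k = rev (map v [n..<k])"

lemma isuffix_split:
  assumes "n \<le> k"
  shows "isuffix v k = iseg v n k @ isuffix v n"
proof -
  have "[0..<k] = [0..<n] @ [n..<k]"
    using upt_add_eq_append[of 0 n "k - n"] assms by simp
  then show ?thesis
    by (simp add: isuffix_def iseg_def)
qed

lemma iseg_Suc: "n \<le> k \<Longrightarrow> iseg v n (Suc k) = v k # iseg v n k"
  by (simp add: iseg_def)

definition seg_prod :: "iword \<Rightarrow> nat \<Rightarrow> nat \<Rightarrow> real \<Rightarrow> real" where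
  "seg_prod v n j a = twoprod (iseg v n (n + j)) (isuffix v n) a"

definition seg_prod_lim :: "iword \<Rightarrow> nat \<Rightarrow> real \<Rightarrow> real" where
  "seg_prod_lim v n a = lim (\<lambda>j. seg_prod v n j a)"

lemma seg_prod_pos: "1 \<le> wsize (isuffix v n) \<Longrightarrow> 0 < seg_prod v n j 1"
  unfolding seg_prod_def using twoprod_pos[of 1 "isuffix v n"] by simp

lemma decseq_seg_prod:
  assumes "0 \<le> a" "a \<le> real (wsize (isuffix v n)) + 1"
  shows "decseq (\<lambda>j. seg_prod v n j a)"
proof (rule decseq_SucI)
  fix j
  have "0 \<le> a / (real (wsize (iseg v n (n + j) @ isuffix v n)) + 1) * seg_prod v n j a"
    using assms twoprod_bounds(1)[OF assms] by (simp add: seg_prod_def)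
  then show "seg_prod v n (Suc j) a \<le> seg_prod v n j a"
    by (cases "v (n + j)") (auto simp: seg_prod_def iseg_Suc left_diff_distrib)
qed

lemma seg_prod_tendsto:
  assumes "0 \<le> a" "a \<le> real (wsize (isuffix v n)) + 1"
  shows "(\<lambda>j. seg_prod v n j a) \<longlonglongrightarrow> seg_prod_lim v n a"
proof -
  have "Bseq (\<lambda>j. seg_prod v n j a)"
    using twoprod_bounds[OF assms] by (intro BseqI'[of _ 1]) (auto simp: seg_prod_def)
  then have "convergent (\<lambda>j. seg_prod v n j a)"
    using decseq_seg_prod[OF assms] by (intro Bseq_monoseq_convergent) (simp_all add: decseq_imp_monoseq)
  then show ?thesis
    unfolding seg_prod_lim_def by (simp add: convergent_LIMSEQ_iff)
qed

lemma div_wsize_isuffix_tendsto_0: "(\<lambda>j. C / (real (wsize (isuffix v (n + j))) + 1)) \<longlonglongrightarrow> 0"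
proof -
  have "real j \<le> real (wsize (isuffix v (n + j))) + 1" for j
    using wsize_isuffix_ge[of "n + j" v] by simp
  then have "filterlim (\<lambda>j. real (wsize (isuffix v (n + j))) + 1) at_top sequentially"
    by (intro filterlim_at_top_mono[OF filterlim_real_sequentially always_eventually]) simp
  then show ?thesis
    by (rule tendsto_divide_0[OF tendsto_const filterlim_at_top_imp_at_infinity])
qed

lemma twoprod_append_iseg_bounds:
  fixes a :: nat
  assumes x: "1 \<le> wsize (isuffix v n)" "a \<le> wsize (isuffix v n)" and j: "2 * a \<le> j"
    and P: "P = q @ iseg v n (n + j)"
  defines "e \<equiv> real a + 2 * real a ^ 2 / (real (wsize (isuffix v (n + j))) + 1)"
  shows "(twoprod P (isuffix v n) 1 / seg_prod v n j 1) powr e * seg_prod v n j (real a)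
           \<le> twoprod P (isuffix v n) (real a)"
    and "twoprod P (isuffix v n) (real a)
           \<le> (twoprod P (isuffix v n) 1 / seg_prod v n j 1) ^ a * seg_prod v n j (real a)"
proof -
  define z where "z = isuffix v (n + j)"
  have z: "z = iseg v n (n + j) @ isuffix v n"
    unfolding z_def by (rule isuffix_split) simp
  have split: "twoprod P (isuffix v n) b = twoprod q z b * seg_prod v n j b" for b
    unfolding P twoprod_append seg_prod_def z ..
  have "0 < seg_prod v n j 1"
    using x(1) by (rule seg_prod_pos)
  then have ratio: "twoprod P (isuffix v n) 1 / seg_prod v n j 1 = twoprod q z 1"
    by (simp add: split)
  have "0 \<le> seg_prod v n j (real a)"
    unfolding seg_prod_def using twoprod_bounds(1)[of "real a" "isuffix v n"] x by simp
  moreover have "n + j \<le> wsize z"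
    unfolding z_def by (rule wsize_isuffix_ge)
  then have "2 * real a \<le> real (wsize z) + 1" "1 \<le> wsize z"
    using j z x(1) by auto
  then have "twoprod q z 1 powr e \<le> twoprod q z (real a)" "twoprod q z (real a) \<le> twoprod q z 1 ^ a"
    unfolding e_def z_def[symmetric] by (auto intro: twoprod_ge_powr twoprod_le_power)
  ultimately show
    "(twoprod P (isuffix v n) 1 / seg_prod v n j 1) powr e * seg_prod v n j (real a)
       \<le> twoprod P (isuffix v n) (real a)"
    "twoprod P (isuffix v n) (real a)
       \<le> (twoprod P (isuffix v n) 1 / seg_prod v n j 1) ^ a * seg_prod v n j (real a)"
    unfolding ratio unfolding split by (auto intro: mult_right_mono)
qed

lemma twoprod_le_seg_prod:
  assumes "1 \<le> wsize (isuffix v n)" "P = q @ iseg v n (n + j)"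
  shows "twoprod P (isuffix v n) 1 \<le> seg_prod v n j 1"
proof -
  have "twoprod P (isuffix v n) 1 = twoprod q (isuffix v (n + j)) 1 * seg_prod v n j 1"
    using assms(2) by (simp add: twoprod_append seg_prod_def isuffix_split[of n "n + j"])
  moreover have "0 < seg_prod v n j 1"
    using assms(1) by (rule seg_prod_pos)
  ultimately show ?thesis
    using twoprod_bounds[of 1 "isuffix v (n + j)" q] by (simp add: mult_left_le_one_le)
qed

lemma twoprod_tendsto:
  fixes a :: nat
  assumes x: "1 \<le> wsize (isuffix v n)" "a \<le> wsize (isuffix v n)"
    and c: "(\<lambda>k. twoprod (P k) (isuffix v n) 1) \<longlonglongrightarrow> c" "0 < c"
    and P: "\<And>j. eventually (\<lambda>k. \<exists>q. P k = q @ iseg v n (n + j)) sequentially"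
  shows "(\<lambda>k. twoprod (P k) (isuffix v n) (real a))
           \<longlonglongrightarrow> (c / seg_prod_lim v n 1) powr real a * seg_prod_lim v n (real a)"
proof -
  define F where "F k b = twoprod (P k) (isuffix v n) b" for k b
  define \<phi> where "\<phi> j = seg_prod v n j 1" for j
  define \<psi> where "\<psi> j = seg_prod v n j (real a)" for j
  define e where "e j = real a + 2 * real a ^ 2 / (real (wsize (isuffix v (n + j))) + 1)" for j
  have \<phi>_pos: "0 < \<phi> j" for j
    unfolding \<phi>_def using x(1) by (rule seg_prod_pos)
  have \<phi>_lim: "\<phi> \<longlonglongrightarrow> seg_prod_lim v n 1" and \<psi>_lim: "\<psi> \<longlonglongrightarrow> seg_prod_lim v n (real a)"
    unfolding \<phi>_def \<psi>_def using x by (auto intro: seg_prod_tendsto)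
  have "c \<le> \<phi> j" for j
    using P[of j] twoprod_le_seg_prod[OF x(1)] unfolding \<phi>_def
    by (intro tendsto_upperbound[OF c(1)]) (auto elim: eventually_mono)
  then have \<Phi>_pos: "0 < seg_prod_lim v n 1"
    using c(2) tendsto_lowerbound[OF \<phi>_lim, of c] by force
  have ratio_lim: "(\<lambda>j. c / \<phi> j) \<longlonglongrightarrow> c / seg_prod_lim v n 1"
    using \<phi>_lim \<Phi>_pos by (intro tendsto_divide tendsto_const) auto
  have e_lim: "e \<longlonglongrightarrow> real a"
    using tendsto_add[OF tendsto_const div_wsize_isuffix_tendsto_0, of "real a" "2 * real a ^ 2" v n]
    unfolding e_def by simp
  show ?thesis
  proof (rule tendsto_squeeze_family[where J = "2 * a"
        and lo = "\<lambda>j k. (F k 1 / \<phi> j) powr e j * \<psi> j" and hi = "\<lambda>j k. (F k 1 / \<phi> j) ^ a * \<psi> j"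
        and Lo = "\<lambda>j. (c / \<phi> j) powr e j * \<psi> j" and Hi = "\<lambda>j. (c / \<phi> j) ^ a * \<psi> j"])
    fix j
    assume j: "2 * a \<le> j"
    show "\<forall>\<^sub>F k in sequentially. (F k 1 / \<phi> j) powr e j * \<psi> j \<le> twoprod (P k) (isuffix v n) (real a)
            \<and> twoprod (P k) (isuffix v n) (real a) \<le> (F k 1 / \<phi> j) ^ a * \<psi> j"
      using P[of j] by (rule eventually_mono)
        (use twoprod_append_iseg_bounds[OF x j] in \<open>auto simp: F_def \<phi>_def \<psi>_def e_def\<close>)
    have "(\<lambda>k. F k 1 / \<phi> j) \<longlonglongrightarrow> c / \<phi> j"
      using c(1) \<phi>_pos[of j] unfolding F_def by (intro tendsto_divide tendsto_const) auto
    moreover have "c / \<phi> j \<noteq> 0"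
      using c(2) \<phi>_pos[of j] by simp
    ultimately show "(\<lambda>k. (F k 1 / \<phi> j) powr e j * \<psi> j) \<longlonglongrightarrow> (c / \<phi> j) powr e j * \<psi> j"
      and "(\<lambda>k. (F k 1 / \<phi> j) ^ a * \<psi> j) \<longlonglongrightarrow> (c / \<phi> j) ^ a * \<psi> j"
      by (auto intro!: tendsto_intros)
  next
    have "c / seg_prod_lim v n 1 \<noteq> 0"
      using c(2) \<Phi>_pos by simp
    then show "(\<lambda>j. (c / \<phi> j) powr e j * \<psi> j)
                 \<longlonglongrightarrow> (c / seg_prod_lim v n 1) powr real a * seg_prod_lim v n (real a)"
      using ratio_lim e_lim \<psi>_lim by (intro tendsto_mult tendsto_powr) auto
    have "(\<lambda>j. (c / \<phi> j) ^ a * \<psi> j) \<longlonglongrightarrow> (c / seg_prod_lim v n 1) ^ a * seg_prod_lim v n (real a)"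
      using ratio_lim \<psi>_lim by (intro tendsto_mult tendsto_power)
    then show "(\<lambda>j. (c / \<phi> j) ^ a * \<psi> j)
                 \<longlonglongrightarrow> (c / seg_prod_lim v n 1) powr real a * seg_prod_lim v n (real a)"
      using c(2) \<Phi>_pos by (simp add: powr_realpow)
  qed
qed

lemma letterwise_eventually_append_isuffix:
  assumes "letterwise vs v"
  shows "eventually (\<lambda>n. vs n = take (length (vs n) - k) (vs n) @ isuffix v k) sequentially"
  using assms unfolding letterwise_def
proof (elim allE[of _ k] eventually_mono)
  fix y
  assume y: "k \<le> length y \<and> (\<forall>p<k. rev y ! p = v p)"
  then have "rev (drop (length y - k) y) = rev (isuffix v k)"
    by (intro nth_equalityI) (auto simp: rev_drop isuffix_def)
  then show "y = take (length y - k) y @ isuffix v k"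
    by (metis append_take_drop_id rev_is_rev_conv)
qed

lemma admissible_prefixes:
  assumes "admissible r v \<beta> vs" "1 \<le> wsize (isuffix v n)"
  defines "P k \<equiv> take (length (vs k) - n) (vs k)"
  shows "eventually (\<lambda>k. vs k = P k @ isuffix v n) sequentially"
    and "\<And>j. eventually (\<lambda>k. \<exists>q. P k = q @ iseg v n (n + j)) sequentially"
    and "(\<lambda>k. twoprod (P k) (isuffix v n) 1) \<longlonglongrightarrow> \<beta> * pi_inf v / pi_fin (isuffix v n)"
proof -
  have lw: "letterwise vs v" and \<pi>: "(\<lambda>k. pi_fin (vs k)) \<longlonglongrightarrow> \<beta> * pi_inf v"
    using assms(1) by (auto simp: admissible_def)
  show vs: "eventually (\<lambda>k. vs k = P k @ isuffix v n) sequentially"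
    using letterwise_eventually_append_isuffix[OF lw, of n] by (simp add: P_def)
  show "eventually (\<lambda>k. \<exists>q. P k = q @ iseg v n (n + j)) sequentially" for j
    using letterwise_eventually_append_isuffix[OF lw, of "n + j"] vs
    by eventually_elim (metis append.assoc append_same_eq isuffix_split le_add1)
  have "eventually (\<lambda>k. pi_fin (vs k) / pi_fin (isuffix v n) = twoprod (P k) (isuffix v n) 1) sequentially"
    using vs by eventually_elim (use pi_fin_append[OF assms(2)] pi_fin_pos[of "isuffix v n"] in simp)
  moreover have "(\<lambda>k. pi_fin (vs k) / pi_fin (isuffix v n)) \<longlonglongrightarrow> \<beta> * pi_inf v / pi_fin (isuffix v n)"
    by (intro tendsto_divide \<pi> tendsto_const) (simp add: pi_fin_pos less_imp_neq[symmetric])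
  ultimately show "(\<lambda>k. twoprod (P k) (isuffix v n) 1) \<longlonglongrightarrow> \<beta> * pi_inf v / pi_fin (isuffix v n)"
    by (rule Lim_transform_eventually[rotated])
qed

lemma mu_fin_tendsto:
  assumes r: "1 \<le> r" and v: "0 < pi_inf v" and \<beta>: "0 < \<beta>" and w: "wf_word r w"
  shows "\<exists>L. \<forall>vs. admissible r v \<beta> vs \<longrightarrow> (\<lambda>n. mu_fin r w (vs n)) \<longlonglongrightarrow> L"
proof -
  define n where "n = max 1 (wsize w)"
  define x where "x = isuffix v n"
  have x: "1 \<le> wsize x" "wsize w \<le> wsize x"
    using wsize_isuffix_ge[of n v] by (auto simp: x_def n_def)
  obtain B where B: "\<And>p. npaths r w (p @ x) = (\<Sum>i=0..length w. B i * twoprod p x (real (wsize (drop i w))))"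
    using npaths_lincomb[OF r w x(2)] by blast
  define c where "c = \<beta> * pi_inf v / pi_fin x"
  have "0 < c"
    unfolding c_def using \<beta> v pi_fin_pos[of x] by simp
  have "wsize (drop i w) \<le> wsize x" for i
    using wsize_drop_le[of i w] x(2) by simp
  define L where "L = real (dpaths r [] w) * (\<Sum>i=0..length w. B i *
      ((c / seg_prod_lim v n 1) powr real (wsize (drop i w)) * seg_prod_lim v n (real (wsize (drop i w)))))"
  have "(\<lambda>k. mu_fin r w (vs k)) \<longlonglongrightarrow> L" if vs: "admissible r v \<beta> vs" for vs
  proof -
    define P where "P k = take (length (vs k) - n) (vs k)" for k
    note prefixes = admissible_prefixes[OF vs x(1)[unfolded x_def], folded P_def]
    have "(\<lambda>k. real (dpaths r [] w) * (\<Sum>i=0..length w. B i * twoprod (P k) x (real (wsize (drop i w)))))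
            \<longlonglongrightarrow> L"
      unfolding L_def x_def using x prefixes(2,3) \<open>0 < c\<close> \<open>wsize (drop _ w) \<le> wsize x\<close>
      by (intro tendsto_mult tendsto_const tendsto_sum twoprod_tendsto) (auto simp: x_def c_def)
    moreover have "eventually (\<lambda>k. real (dpaths r [] w) * (\<Sum>i=0..length w. B i * twoprod (P k) x (real (wsize (drop i w))))
                                    = mu_fin r w (vs k)) sequentially"
      using prefixes(1) by eventually_elim (simp add: mu_fin_eq_npaths B[unfolded x_def] x_def)
    ultimately show ?thesis
      by (rule Lim_transform_eventually)
  qed
  then show ?thesis
    by blast
qed

lemma mu_fin_tendsto_mu:
  assumes "1 \<le> r" "v \<in> YF_plus r" "0 < \<beta>" "\<beta> \<le> 1" "wf_word r w" "admissible r v \<beta> vs"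
  shows "(\<lambda>n. mu_fin r w (vs n)) \<longlonglongrightarrow> mu r v \<beta> w"
proof -
  have v: "wf_iword r v" "0 < pi_inf v"
    using assms(2) by (auto simp: YF_plus_def)
  obtain L where L: "\<forall>vs. admissible r v \<beta> vs \<longrightarrow> (\<lambda>n. mu_fin r w (vs n)) \<longlonglongrightarrow> L"
    using mu_fin_tendsto[OF assms(1) v(2) assms(3,5)] by blast
  moreover have "mu r v \<beta> w = L"
    using ex_admissible[OF v(1) assms(3,4) v(2)] L by (intro mu_eqI) auto
  ultimately show ?thesis
    using assms(6) by simp
qed

theorem mainTheorem11:
  fixes r :: nat and v :: iword and \<beta> :: real and u :: word
  assumes "r \<ge> 2"
    and "v \<in> YF_plus r"
    and "0 < \<beta>" and "\<beta> \<le> 1"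
    and "wf_word 1 u"
  shows "(\<Sum>w\<in>S_set r u. mu r v \<beta> w) = mu 1 (s_iword v) \<beta> u"
proof (rule mu_eqI[symmetric])
  have r: "1 \<le> r" and v: "wf_iword r v" "0 < pi_inf v"
    using assms(1,2) by (auto simp: YF_plus_def)
  show "\<exists>us. admissible 1 (s_iword v) \<beta> us"
    using ex_admissible[OF v(1) assms(3,4) v(2)] admissible_s_word by blast
  fix us
  assume us: "admissible 1 (s_iword v) \<beta> us"
  define ys where "ys n = lift_word v (us n)" for n
  have ys: "admissible r v \<beta> ys"
    unfolding ys_def by (rule admissible_lift_word[OF r v(1) us])
  have "mu_fin 1 u (us n) = (\<Sum>w\<in>S_set r u. mu_fin r w (ys n))" for n
    using sum_fibre_mu_fin[OF r, of "ys n" u] ys us s_word_lift_word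
    by (simp add: admissible_def ys_def)
  moreover have "(\<lambda>n. \<Sum>w\<in>S_set r u. mu_fin r w (ys n)) \<longlonglongrightarrow> (\<Sum>w\<in>S_set r u. mu r v \<beta> w)"
    using mu_fin_tendsto_mu[OF r assms(2-4) _ ys] by (intro tendsto_sum) (simp add: S_set_def)
  ultimately show "(\<lambda>n. mu_fin 1 u (us n)) \<longlonglongrightarrow> (\<Sum>w\<in>S_set r u. mu r v \<beta> w)"
    by simp
qed

end
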